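(* In the setting below, if $g(x)$ is self-reciprocal, then $\gcd(t_{22}(x),g_{12}(x))=1$ if and only if $\gcd\big(t_{22}(x),\ g_{11}(x)\bar g_{11}(x)+g_{12}(x)\bar g_{12}(x)\big)=1$.
   Context: Let $q$ be a prime power, $F=\mathbb{F}_q$, $m\ge1$ with $\gcd(q,m)=1$. For a nonzero polynomial $f$ of degree $k$, $f^*(x)=x^kf(x^{-1})$; $f$ is self-reciprocal if $f^*=\alpha f$ for some $\alpha\in F$. For a polynomial $f$ of degree at most $m$, $\bar f(x)=x^m f(x^{-1})$. Let $g_{11},g_{12}\in F[x]$ with $g_{11}\mid x^m-1$ and $\deg g_{12}<m$ (so that $(g_{11},g_{12})$ generates a one-generator quasi-cyclic code of index 2 in $(F[x]/\langle x^m-1\rangle)^2$). Let $g=\gcd(g_{11},g_{12})$, $g_{11}=g\,g_{11}'$, $g_{22}=(x^m-1)/g_{11}'$, $g_{22}=g\,g_{22}'$, $r_{22}=\gcd(g_{22}',g_{22}'^* )$, $t_{22}=g_{22}'/r_{22}$. *)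

theory Defs
  imports "HOL-Computational_Algebra.Computational_Algebra" "HOL-Library.Cardinality"
begin

text \<open>Reciprocal f* (x) = x^(deg f) f(1/x) is the library's reflect_poly.
 Self-reciprocal: f nonzero and f* = alpha f for some alpha in F.\<close>
definition self_reciprocal :: "'a::field poly \<Rightarrow> bool" where
  "self_reciprocal f \<longleftrightarrow> f \<noteq> 0 \<and> (\<exists>\<alpha>. reflect_poly f = smult \<alpha> f)"

text \<open>bar f (x) = x^m f(1/x), for deg f \<le> m.\<close>
definition bar_poly :: "nat \<Rightarrow> 'a::field poly \<Rightarrow> 'a poly" where
  "bar_poly m f = monom 1 (m - degree f) * reflect_poly f"

end

theory Submission
  imports Defs
begin

text \<open>
  Because the characteristic does not divide m, X = x^m - 1 is squarefree; it is also
  self-reciprocal. Writing X = g11 g22', the factor t22 of g22' is therefore coprime both to g11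
  and to g22'*, while it divides X* = g11* g22'*; so t22 divides g11* and hence g11 bar(g11).
  Modulo t22 the sum thus reduces to g12 bar(g12), and it remains to see that a common divisor d
  of t22 and bar(g12) is a unit. Such a d divides g11* and g12*, so d* divides g = gcd g11 g12;
  as g is self-reciprocal, d divides g* ~ g, hence g11, and d is a unit because t22 is coprime
  to g11.
\<close>

lemma of_nat_CARD_eq_0: "of_nat CARD('a::{ring_1,finite}) = (0::'a)"
proof -
  have "(\<Sum>x\<in>UNIV. x + 1) = (\<Sum>x\<in>UNIV. x :: 'a)"
    by (rule sum.reindex_bij_witness[of _ "\<lambda>x. x - 1" "\<lambda>x. x + 1"]) auto
  then show ?thesis
    by (simp add: sum.distrib)
qed

lemma of_nat_neq_0_if_coprime_card:
  assumes "coprime CARD('a::{ring_1,finite}) m"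
  shows "of_nat m \<noteq> (0::'a)"
proof
  assume "of_nat m = (0::'a)"
  then have "CHAR('a) dvd m"
    by (simp add: of_nat_eq_0_iff_char_dvd)
  moreover have "CHAR('a) dvd CARD('a)"
    using of_nat_CARD_eq_0 by (simp add: of_nat_eq_0_iff_char_dvd)
  ultimately have "CHAR('a) dvd 1"
    using assms by (meson coprime_common_divisor)
  then show False
    by simp
qed

lemma squarefree_monom_minus_1:
  assumes "of_nat m \<noteq> (0::'a::field)"
  shows "squarefree (monom 1 m - 1 :: 'a poly)"
proof (rule squarefreeI)
  fix d :: "'a poly"
  assume "d\<^sup>2 dvd monom 1 m - 1"
  then obtain k where X: "monom 1 m - 1 = d * (d * k)"
    by (metis dvdE power2_eq_square mult.assoc)
  have "d dvd pderiv (monom 1 m - 1)"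
    unfolding X by (simp add: pderiv_mult)
  moreover have "d dvd monom 1 m - 1"
    unfolding X by simp
  ultimately have "d dvd smult (of_nat m) (monom 1 m - 1) - [:0, 1:] * pderiv (monom 1 m - 1)"
    by (metis dvd_diff dvd_smult dvd_mult)
  also have "\<dots> = - [:of_nat m:]"
  proof -
    obtain n where m: "m = Suc n"
      using assms by (cases m) auto
    have "pderiv (monom (1::'a) m - 1) = monom (of_nat m) n"
      by (simp add: m pderiv_diff pderiv_monom)
    then have "[:0, 1:] * pderiv (monom 1 m - 1) = smult (of_nat m) (monom (1::'a) m)"
      by (simp add: m monom_Suc smult_monom)
    then show ?thesis
      by (simp add: smult_diff_right)
  qed
  finally have "d dvd - [:of_nat m:]" .
  moreover have "is_unit (- [:of_nat m :: 'a:])"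
    using assms by (simp add: is_unit_const_poly_iff dvd_field_iff)
  ultimately show "d dvd 1"
    by (rule dvd_unit_imp_unit)
qed

lemma reflect_poly_monom_minus_1:
  assumes "m \<ge> 1"
  shows "reflect_poly (monom (1::'a::comm_ring_1) m - 1) = - (monom 1 m - 1)"
proof -
  have "degree (monom (1::'a) m - 1) = m"
    using degree_add_eq_left[of "-1" "monom (1::'a) m"] assms by (simp add: degree_monom_eq)
  then show ?thesis
    using assms by (intro poly_eqI) (auto simp: coeff_reflect_poly coeff_monom)
qed

lemma div_gcd_dvd_self: "a div gcd a b dvd (a :: 'a::semiring_gcd)"
  by (metis dvd_div_mult_self dvd_triv_left gcd_dvd1)

lemma squarefree_mult_imp_coprime:
  assumes "squarefree (a * b)"
  shows "coprime a b"
proof (rule coprimeI)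
  fix c
  assume "c dvd a" "c dvd b"
  then have "c\<^sup>2 dvd a * b"
    by (simp add: power2_eq_square mult_dvd_mono)
  with assms show "is_unit c"
    by (rule squarefreeD)
qed

lemma squarefree_imp_coprime_div_gcd:
  fixes h k :: "'a::semiring_gcd"
  assumes "squarefree h"
  shows "coprime (h div gcd h k) k"
proof (rule coprimeI)
  fix c
  assume c: "c dvd h div gcd h k" "c dvd k"
  have "c dvd gcd h k"
    using c div_gcd_dvd_self[of h k] by (meson dvd_trans gcd_greatest)
  with c(1) have "c * c dvd h div gcd h k * gcd h k"
    by (rule mult_dvd_mono)
  then have "c\<^sup>2 dvd h"
    by (simp add: power2_eq_square)
  with assms show "is_unit c"
    by (simp add: squarefreeD)
qed

lemma reflect_poly_dvd_reflect_poly: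
  "p dvd q \<Longrightarrow> reflect_poly p dvd reflect_poly (q :: 'a::idom poly)"
  by (metis dvd_def reflect_poly_mult)

lemma reflect_poly_reflect_poly_dvd: "reflect_poly (reflect_poly f) dvd (f :: 'a::idom poly)"
proof (cases "f = 0")
  case False
  obtain h where h: "f = [:0, 1:] ^ order 0 f * h" "\<not> [:0, 1:] dvd h"
    using order_decomp[OF False, of 0] by auto
  have "coeff h 0 \<noteq> 0"
    using h(2) dvd_iff_poly_eq_0[of 0 h] by (simp add: poly_0_coeff_0)
  have "reflect_poly [:0, 1 :: 'a:] = 1"
    by (rule poly_eqI) (auto simp: coeff_reflect_poly coeff_pCons split: nat.split)
  then have "reflect_poly f = reflect_poly h"
    by (subst h(1)) (simp add: reflect_poly_mult reflect_poly_power)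
  with \<open>coeff h 0 \<noteq> 0\<close> have "reflect_poly (reflect_poly f) = h"
    by simp
  then show ?thesis
    using h(1) by (metis dvd_triv_right)
qed simp

lemma coeff_0_neq_0_if_dvd:
  fixes p q :: "'a::comm_semiring_1 poly"
  assumes "p dvd q" "coeff q 0 \<noteq> 0"
  shows "coeff p 0 \<noteq> 0"
proof -
  obtain k where "q = p * k"
    using assms(1) by blast
  with assms(2) show ?thesis
    by (auto simp: coeff_mult_0)
qed

lemma coprime_monom_if_coeff_0_neq_0:
  fixes p :: "'a::field_gcd poly"
  assumes "coeff p 0 \<noteq> 0"
  shows "coprime p (monom 1 k)"
proof -
  have "\<not> [:0, 1:] dvd p"
    using assms dvd_iff_poly_eq_0[of 0 p] by (simp add: poly_0_coeff_0)
  then have "coprime [:0, 1:] p"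
    by (simp add: prime_elem_imp_coprime prime_elem_linear_field_poly)
  then show ?thesis
    by (simp add: monom_altdef coprime_commute)
qed

lemma dvd_bar_poly_iff:
  fixes p f :: "'a::field_gcd poly"
  assumes "coeff p 0 \<noteq> 0"
  shows "p dvd bar_poly m f \<longleftrightarrow> p dvd reflect_poly f"
  unfolding bar_poly_def
  by (rule coprime_dvd_mult_right_iff[OF coprime_monom_if_coeff_0_neq_0[OF assms]])

lemma self_reciprocal_dvd_reflect_poly_iff:
  assumes "self_reciprocal g"
  shows "p dvd reflect_poly g \<longleftrightarrow> p dvd g"
proof -
  obtain \<alpha> where \<alpha>: "reflect_poly g = smult \<alpha> g" and "g \<noteq> 0"
    using assms unfolding self_reciprocal_def by blast
  then have "\<alpha> \<noteq> 0"
    by (metis reflect_poly_eq_0_iff smult_0_left)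
  with \<alpha> show ?thesis
    by (simp add: dvd_smult_iff)
qed

lemma dvd_gcd_if_dvd_reflect_poly:
  fixes a b p :: "'a::field_gcd poly"
  assumes "self_reciprocal (gcd a b)" "coeff p 0 \<noteq> 0"
    and "p dvd reflect_poly a" "p dvd reflect_poly b"
  shows "p dvd gcd a b"
proof -
  have "reflect_poly p dvd a" "reflect_poly p dvd b"
    using assms(3,4) reflect_poly_dvd_reflect_poly reflect_poly_reflect_poly_dvd dvd_trans by blast+
  then have "reflect_poly (reflect_poly p) dvd reflect_poly (gcd a b)"
    by (simp add: reflect_poly_dvd_reflect_poly)
  with assms(1,2) show ?thesis
    by (simp add: self_reciprocal_dvd_reflect_poly_iff)
qed

lemma coprime_iff_coprime_bar_poly_sum:
  fixes t a b :: "'a::field_gcd poly"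
  assumes "self_reciprocal (gcd a b)" "coprime t a"
    and "t dvd reflect_poly a" "coeff t 0 \<noteq> 0"
  shows "coprime t b \<longleftrightarrow> coprime t (a * bar_poly m a + b * bar_poly m b)"
proof -
  have "t dvd a * bar_poly m a"
    using assms(3,4) by (simp add: dvd_bar_poly_iff)
  then obtain k where "a * bar_poly m a = k * t"
    by (metis dvdE mult.commute)
  then have "coprime t (a * bar_poly m a + b * bar_poly m b) \<longleftrightarrow> coprime t (b * bar_poly m b)"
    by (simp add: coprime_iff_gcd_eq_1 gcd_add_mult)
  moreover have "coprime t (bar_poly m b)" if "coprime t b"
  proof (rule coprimeI)
    fix d
    assume d: "d dvd t" "d dvd bar_poly m b"
    have "coeff d 0 \<noteq> 0"
      using d(1) assms(4) by (rule coeff_0_neq_0_if_dvd)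
    moreover have "d dvd reflect_poly b"
      using d(2) \<open>coeff d 0 \<noteq> 0\<close> by (simp add: dvd_bar_poly_iff)
    moreover have "d dvd reflect_poly a"
      using d(1) assms(3) by (rule dvd_trans)
    ultimately have "d dvd a"
      using assms(1) dvd_gcd_if_dvd_reflect_poly dvd_trans gcd_dvd1 by blast
    then show "is_unit d"
      by (rule coprime_common_divisor[OF assms(2) d(1)])
  qed
  ultimately show ?thesis
    by auto
qed

lemma
  fixes a h :: "'a::field_gcd poly"
  assumes "squarefree (a * h)" "a * h dvd reflect_poly (a * h)"
  defines "t \<equiv> h div gcd h (reflect_poly h)"
  shows div_gcd_reflect_poly_coprime: "coprime t a"
    and div_gcd_reflect_poly_dvd_reflect_poly: "t dvd reflect_poly a"
proof -
  have "t dvd h"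
    unfolding t_def by (rule div_gcd_dvd_self)
  moreover have "coprime h a"
    using squarefree_mult_imp_coprime[OF assms(1)] by (simp add: coprime_commute)
  ultimately show "coprime t a"
    by (rule coprime_divisors[OF _ dvd_refl])
  have "coprime t (reflect_poly h)"
    unfolding t_def using squarefree_multD(2)[OF assms(1)] by (rule squarefree_imp_coprime_div_gcd)
  moreover have "t dvd reflect_poly a * reflect_poly h"
    using \<open>t dvd h\<close> assms(2) by (metis dvd_mult dvd_trans reflect_poly_mult)
  ultimately show "t dvd reflect_poly a"
    by (simp add: coprime_dvd_mult_left_iff)
qed

theorem lemma4p1:
  fixes g11 g12 :: "'a::{field_gcd,finite} poly" and m :: nat
  assumes "m \<ge> 1"
    and "coprime (CARD('a)) m"
    and "g11 dvd (monom 1 m - 1)"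
    and "degree g12 < m"
    and "self_reciprocal (gcd g11 g12)"
  shows "let g = gcd g11 g12;
             g11' = g11 div g;
             g22 = (monom 1 m - 1) div g11';
             g22' = g22 div g;
             r22 = gcd g22' (reflect_poly g22');
             t22 = g22' div r22
         in (gcd t22 g12 = 1 \<longleftrightarrow>
             gcd t22 (g11 * bar_poly m g11 + g12 * bar_poly m g12) = 1)"
proof -
  define X :: "'a poly" where "X = monom 1 m - 1"
  define g where "g = gcd g11 g12"
  define g22' where "g22' = X div (g11 div g) div g"
  define t22 where "t22 = g22' div gcd g22' (reflect_poly g22')"
  have "squarefree X"
    unfolding X_def using assms(2) by (intro squarefree_monom_minus_1 of_nat_neq_0_if_coprime_card)
  have "X dvd reflect_poly X"
    by (simp only: X_def reflect_poly_monom_minus_1[OF assms(1)] dvd_minus_iff dvd_refl)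
  have "g dvd g11" "g \<noteq> 0"
    using assms(5) by (simp_all add: g_def self_reciprocal_def)
  then have "g22' = X div g11"
    using assms(3) by (simp add: g22'_def X_def div_div_eq_right)
  then have X: "X = g11 * g22'"
    using assms(3) by (simp add: X_def)
  have "coprime t22 g11" "t22 dvd reflect_poly g11"
    using \<open>squarefree X\<close> \<open>X dvd reflect_poly X\<close> unfolding X t22_def
    by (rule div_gcd_reflect_poly_coprime div_gcd_reflect_poly_dvd_reflect_poly)+
  moreover have "coeff t22 0 \<noteq> 0"
  proof (rule coeff_0_neq_0_if_dvd)
    show "t22 dvd X"
      unfolding X t22_def by (rule dvd_trans[OF div_gcd_dvd_self dvd_triv_right])
    show "coeff X 0 \<noteq> 0"
      using assms(1) by (simp add: X_def coeff_monom)
  qed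
  ultimately have "coprime t22 g12 \<longleftrightarrow> coprime t22 (g11 * bar_poly m g11 + g12 * bar_poly m g12)"
    using assms(5) by (intro coprime_iff_coprime_bar_poly_sum)
  then show ?thesis
    unfolding Let_def by (simp only: X_def g_def g22'_def t22_def coprime_iff_gcd_eq_1)
qed

end
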